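(* Let $r\ge1$, $B>0$, $P$ a finite arc set with $c\in\mathbb{R}_{\ge0}^P$ and $P_+=\{a\in P:c_a>0\}\neq\emptyset$. The minimum of $\sum_{a\in P_+}c_a y_a$ over $y\in\mathbb{R}_{>0}^{P_+}$ with $\sum_{a\in P_+}y_a^{-r}=B$ is attained uniquely at $y_a=\dfrac{\left(\sum_{a'\in P}c_{a'}^{r/(r+1)}\right)^{1/r}}{c_a^{1/(r+1)}B^{1/r}}$ for $a\in P_+$, and the minimum value equals $\left(\sum_{a\in P}\left(c_a/B^{1/r}\right)^{r/(r+1)}\right)^{(r+1)/r}$. Consequently, the optimal value (infimum) of the Network Design Problem with $\bar y\equiv\infty$ equals $\min_{P\in\mathcal{P}}\left[\left(\sum_{a\in P}c'_a\right)^{(r+1)/r}+\sum_{a\in P}\gamma_a\right]$ where $c'_a=(c_a/B^{1/r})^{r/(r+1)}$ and $\mathcal{P}$ is the set of $s$--$t$ paths of $G$.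
   Context: Fix $r\ge1$. Let $G=(V,A)$ be a weakly connected directed graph with distinct source $s$ and sink $t$; $\mathcal P$ denotes the set of (arc sets of) $s$--$t$ paths in the underlying undirected graph. For $y\in\mathbb{R}_{\ge 0}^A$ let $\operatorname{supp}(y)=\{a: y_a>0\}$, $G'=(V,\operatorname{supp}(y))$ with node-arc incidence matrix $\Gamma'$, and $R^y_{s,t}=\min\{\sum_{a\in\operatorname{supp}(y)} |f_a|^{r+1}/y_a^{r} : \Gamma' f=\mathbf{1}_s-\mathbf{1}_t\}$ ($=\infty$ if $s,t$ are disconnected in $G'$). The Network Design Problem, given $c,\gamma\in\mathbb{R}_{\ge0}^A$, bounds $\bar y\in(\mathbb{R}_{\ge0}\cup\{\infty\})^A$ and $B>0$, asks for the infimum of $\sum_{a\in A}(c_a y_a+\gamma_a x_a)$ over $x\in\{0,1\}^A$, $y\in\mathbb{R}_{\ge0}^A$ subject to $R^y_{s,t}\le B$, $y_a\le \bar y_a$, and $y_a>0\Rightarrow x_a=1$ for all $a$. *)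

theory Defs
  imports "HOL-Analysis.Analysis"
begin

definition undirected_rel :: "'a set \<Rightarrow> ('a \<Rightarrow> 'v) \<Rightarrow> ('a \<Rightarrow> 'v) \<Rightarrow> ('v \<times> 'v) set" where
  "undirected_rel A tail head =
     {(tail a, head a) | a. a \<in> A} \<union> {(head a, tail a) | a. a \<in> A}"

definition weakly_connected ::
  "'v set \<Rightarrow> 'a set \<Rightarrow> ('a \<Rightarrow> 'v) \<Rightarrow> ('a \<Rightarrow> 'v) \<Rightarrow> bool" where
  "weakly_connected V A tail head \<longleftrightarrow>
     (\<forall>u\<in>V. \<forall>v\<in>V. (u, v) \<in> (undirected_rel A tail head)\<^sup>*)"

definition supp :: "'a set \<Rightarrow> ('a \<Rightarrow> real) \<Rightarrow> 'a set" where
  "supp A y = {a \<in> A. y a > 0}"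

text \<open>Gamma' f = 1_s - 1_t for the node-arc incidence matrix of (V, S)
  (entry +1 at the tail, -1 at the head of an arc).\<close>
definition is_unit_flow ::
  "'v set \<Rightarrow> 'a set \<Rightarrow> ('a \<Rightarrow> 'v) \<Rightarrow> ('a \<Rightarrow> 'v) \<Rightarrow> 'v \<Rightarrow> 'v \<Rightarrow> ('a \<Rightarrow> real) \<Rightarrow> bool" where
  "is_unit_flow V S tail head s t f \<longleftrightarrow>
     (\<forall>v\<in>V. (\<Sum>a\<in>{a\<in>S. tail a = v}. f a) - (\<Sum>a\<in>{a\<in>S. head a = v}. f a)
            = (if v = s then 1 else if v = t then -1 else 0))"

text \<open>R^y_{s,t}; the infimum of the empty set in ereal is \<infinity>.\<close>
definition eff_res ::
  "'v set \<Rightarrow> 'a set \<Rightarrow> ('a \<Rightarrow> 'v) \<Rightarrow> ('a \<Rightarrow> 'v) \<Rightarrow> 'v \<Rightarrow> 'v \<Rightarrow> real \<Rightarrow> ('a \<Rightarrow> real) \<Rightarrow> ereal" where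
  "eff_res V A tail head s t r y =
     Inf {ereal (\<Sum>a\<in>supp A y. \<bar>f a\<bar> powr (r + 1) / (y a) powr r) | f.
            is_unit_flow V (supp A y) tail head s t f}"

definition st_path ::
  "'a set \<Rightarrow> ('a \<Rightarrow> 'v) \<Rightarrow> ('a \<Rightarrow> 'v) \<Rightarrow> 'v \<Rightarrow> 'v \<Rightarrow> 'a set \<Rightarrow> bool" where
  "st_path A tail head s t P \<longleftrightarrow>
     (\<exists>as vs. distinct as \<and> distinct vs \<and> length vs = length as + 1 \<and>
        vs ! 0 = s \<and> vs ! length as = t \<and> set as \<subseteq> A \<and> P = set as \<and>
        (\<forall>i < length as.
            (tail (as ! i) = vs ! i \<and> head (as ! i) = vs ! (i + 1)) \<or>
            (head (as ! i) = vs ! i \<and> tail (as ! i) = vs ! (i + 1))))"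

definition NDP_value ::
  "'v set \<Rightarrow> 'a set \<Rightarrow> ('a \<Rightarrow> 'v) \<Rightarrow> ('a \<Rightarrow> 'v) \<Rightarrow> 'v \<Rightarrow> 'v \<Rightarrow> real \<Rightarrow>
   ('a \<Rightarrow> real) \<Rightarrow> ('a \<Rightarrow> real) \<Rightarrow> ('a \<Rightarrow> ereal) \<Rightarrow> real \<Rightarrow> ereal" where
  "NDP_value V A tail head s t r c \<gamma> ybar B =
     Inf {ereal (\<Sum>a\<in>A. c a * y a + \<gamma> a * x a) | x y.
            (\<forall>a\<in>A. x a \<in> {0, 1}) \<and> (\<forall>a\<in>A. y a \<ge> 0) \<and>
            eff_res V A tail head s t r y \<le> ereal B \<and>
            (\<forall>a\<in>A. ereal (y a) \<le> ybar a) \<and>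
            (\<forall>a\<in>A. y a > 0 \<longrightarrow> x a = 1)}"

end

theory Submission
  imports Defs
begin

(* For one path with positive costs the problem is separable: with the Lagrange multiplier
   Lambda of the constraint sum y_a^(-r) = B, each summand y -> c_a y + Lambda y^(-r) is strictly
   convex with its minimum at the claimed y_a, which gives existence, optimality, uniqueness
   and the closed-form value.

   For the network problem, let f be a unit s-t flow on supp y of energy at most B.  Hoelder's
   inequality with exponents r+1 and (r+1)/r gives
     (sum_a c_a^(r/(r+1)) |f_a|)^((r+1)/r) <= B^(1/r) * sum_a c_a y_a,
   and pairing f with the shortest-path potential for the weights c_a^(r/(r+1)) produces an
   s-t path P inside supp y whose weight is at most the left-hand sum.  So every design costs
   at least the path objective of some path.  Conversely, sending the unit flow along one
   path with the optimal capacities (for costs perturbed to be positive) comes arbitrarily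
   close to the path objective. *)

section \<open>Elementary inequalities\<close>

lemma exp_gt_add_one_self:
  fixes x :: real
  assumes "x \<noteq> 0"
  shows "1 + x < exp x"
proof (cases "1 + x/2 \<ge> 0")
  case True
  have "(1 + x/2)^2 \<le> exp (x/2) ^ 2"
    using True exp_ge_add_one_self[of "x/2"] by (intro power_mono) auto
  also have "\<dots> = exp x"
    by (simp add: power2_eq_square flip: exp_add)
  moreover have "1 + x < (1 + x/2)^2"
    using assms by (auto simp: power2_eq_square algebra_simps zero_less_mult_iff)
  ultimately show ?thesis by linarith
next
  case False
  then show ?thesis using exp_gt_zero[of x] by linarith
qed

lemma powr_neg_above_tangent:
  fixes r t :: real
  assumes "r > 0" "t > 0"
  shows "1 - r * (t - 1) \<le> t powr (- r)"
    and "t \<noteq> 1 \<Longrightarrow> 1 - r * (t - 1) < t powr (- r)"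
proof -
  define u where "u = ln t"
  have t: "t = exp u" and tr: "t powr (- r) = exp (- r * u)"
    using assms by (simp_all add: u_def powr_def)
  have "1 - r * u \<le> exp (- r * u)"
    using exp_ge_add_one_self[of "- r * u"] by simp
  moreover have "r * u \<le> r * (t - 1)"
    using assms exp_ge_add_one_self[of u] unfolding t by (intro mult_left_mono) linarith+
  ultimately show "1 - r * (t - 1) \<le> t powr (- r)"
    unfolding tr by linarith
  assume "t \<noteq> 1"
  then have "r * u < r * (t - 1)"
    using assms exp_gt_add_one_self[of u] unfolding t by (intro mult_strict_left_mono) auto
  with \<open>1 - r * u \<le> exp (- r * u)\<close> show "1 - r * (t - 1) < t powr (- r)"
    unfolding tr by linarith
qed

lemma linear_plus_powr_neg_min:
  fixes D Y y r :: real
  assumes "D > 0" "Y > 0" "y > 0" "r > 0"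
  defines "\<Lambda> \<equiv> D * Y powr (r + 1) / r"
  shows "D * Y + \<Lambda> * Y powr (- r) \<le> D * y + \<Lambda> * y powr (- r)"
    and "y \<noteq> Y \<Longrightarrow> D * Y + \<Lambda> * Y powr (- r) < D * y + \<Lambda> * y powr (- r)"
proof -
  define t where "t = y / Y"
  have t: "t > 0" "y = t * Y"
    using assms by (simp_all add: t_def)
  have "\<Lambda> * Y powr (- r) = D * Y / r"
    using assms by (simp add: \<Lambda>_def powr_add[symmetric])
  then have lhs: "D * Y + \<Lambda> * Y powr (- r) = D * Y / r * (r + 1)"
    using assms by (simp add: field_simps)
  have "\<Lambda> * y powr (- r) = D * Y / r * t powr (- r)"
    using assms t by (simp add: \<Lambda>_def powr_mult powr_add[symmetric])
  then have rhs: "D * y + \<Lambda> * y powr (- r) = D * Y / r * (r + 1 + (t powr (- r) - (1 - r * (t - 1))))"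
    using assms t by (simp add: field_simps)
  have scale: "D * Y / r > 0"
    using assms by simp
  show "D * Y + \<Lambda> * Y powr (- r) \<le> D * y + \<Lambda> * y powr (- r)"
    unfolding lhs rhs using powr_neg_above_tangent(1)[OF assms(4) t(1)] scale
    by (intro mult_left_mono) auto
  assume "y \<noteq> Y"
  then have "t \<noteq> 1"
    using t assms by auto
  then show "D * Y + \<Lambda> * Y powr (- r) < D * y + \<Lambda> * y powr (- r)"
    unfolding lhs rhs using powr_neg_above_tangent(2)[OF assms(4) t(1)] scale
    by (intro mult_strict_left_mono) auto
qed

lemma sum_powr_scaled_powr:
  fixes r b :: real and d :: "'a \<Rightarrow> real"
  assumes "r > 0" "b > 0" "\<forall>a\<in>P. d a \<ge> 0"
  shows "(\<Sum>a\<in>P. (d a / b powr (1 / r)) powr (r / (r + 1))) powr ((r + 1) / r)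
         = (\<Sum>a\<in>P. d a powr (r / (r + 1))) powr ((r + 1) / r) / b powr (1 / r)"
proof -
  have "(\<Sum>a\<in>P. (d a / b powr (1 / r)) powr (r / (r + 1)))
        = (\<Sum>a\<in>P. d a powr (r / (r + 1))) / b powr (1 / (r + 1))"
    using assms by (simp add: sum_divide_distrib powr_divide powr_powr)
  moreover have "(b powr (1 / (r + 1))) powr ((r + 1) / r) = b powr (1 / r)"
    using assms by (simp add: powr_powr)
  ultimately show ?thesis
    using assms by (simp add: powr_divide sum_nonneg)
qed

lemma Holder_sum_powr:
  fixes a b :: "'i \<Rightarrow> real" and \<alpha> \<beta> :: real
  assumes "finite I" "\<forall>i\<in>I. a i \<ge> 0 \<and> b i \<ge> 0" "\<alpha> \<ge> 0" "\<beta> \<ge> 0" "\<alpha> + \<beta> = 1"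
  shows "(\<Sum>i\<in>I. a i powr \<alpha> * b i powr \<beta>) \<le> (\<Sum>i\<in>I. a i) powr \<alpha> * (\<Sum>i\<in>I. b i) powr \<beta>"
proof -
  define SA where "SA = (\<Sum>i\<in>I. a i)"
  define SB where "SB = (\<Sum>i\<in>I. b i)"
  show ?thesis
  proof (cases "SA > 0 \<and> SB > 0")
    case False
    then have "SA = 0 \<or> SB = 0"
      unfolding SA_def SB_def using assms(2) sum_nonneg[of I a] sum_nonneg[of I b] by force
    then have "(\<forall>i\<in>I. a i = 0) \<or> (\<forall>i\<in>I. b i = 0)"
      unfolding SA_def SB_def using assms(1,2) by (simp add: sum_nonneg_eq_0_iff)
    then show ?thesis by auto
  next
    case True
    have "a i powr \<alpha> * b i powr \<beta> / (SA powr \<alpha> * SB powr \<beta>) \<le> \<alpha> * (a i / SA) + \<beta> * (b i / SB)"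
      if "i \<in> I" for i
    proof (cases "a i = 0 \<or> b i = 0")
      case False
      then have "a i / SA > 0" "b i / SB > 0"
        using assms(2) that True by (auto simp: less_le)
      then show ?thesis
        using Youngs_inequality_0[of \<alpha> \<beta> "a i / SA" "b i / SB"] assms(3-5) True
        by (simp add: powr_divide)
    qed (use assms that True in auto)
    then have "(\<Sum>i\<in>I. a i powr \<alpha> * b i powr \<beta> / (SA powr \<alpha> * SB powr \<beta>))
             \<le> (\<Sum>i\<in>I. \<alpha> * (a i / SA) + \<beta> * (b i / SB))"
      by (rule sum_mono)
    also have "\<dots> = \<alpha> * (SA / SA) + \<beta> * (SB / SB)"
      unfolding SA_def SB_def sum.distrib sum_divide_distrib[symmetric] sum_distrib_left[symmetric] ..
    also have "\<dots> = 1"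
      using True assms(5) by simp
    finally show ?thesis
      using True by (simp add: sum_divide_distrib[symmetric] divide_le_eq SA_def SB_def)
  qed
qed

section \<open>Optimal capacities along a single path\<close>

locale capacity_allocation =
  fixes r B :: real and d :: "'a \<Rightarrow> real" and I :: "'a set"
  assumes r_pos: "r > 0" and B_pos: "B > 0"
    and finite_I: "finite I" and I_nonempty: "I \<noteq> {}"
    and d_pos: "\<And>a. a \<in> I \<Longrightarrow> d a > 0"
begin

definition mass :: real where
  "mass = (\<Sum>a\<in>I. d a powr (r / (r + 1)))"

definition capacity :: "'a \<Rightarrow> real" where
  "capacity a = (mass / B) powr (1 / r) / d a powr (1 / (r + 1))"

definition feasible :: "('a \<Rightarrow> real) \<Rightarrow> bool" where
  "feasible y \<longleftrightarrow> (\<forall>a\<in>I. y a > 0) \<and> (\<Sum>a\<in>I. y a powr (- r)) = B"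

text \<open>The Lagrange multiplier of the constraint \<open>\<Sum> y\<^sub>a\<^sup>-\<^sup>r = B\<close> at the optimum;
  with it every summand of \<open>\<Sum> (d\<^sub>a y\<^sub>a + multiplier * y\<^sub>a\<^sup>-\<^sup>r)\<close> is minimal at \<open>capacity\<close>.\<close>
definition multiplier :: real where
  "multiplier = (mass / B) powr ((r + 1) / r) / r"

lemma mass_pos: "mass > 0"
proof -
  have "d a powr (r / (r + 1)) > 0" if "a \<in> I" for a
    using d_pos[OF that] by simp
  then show ?thesis
    unfolding mass_def using finite_I I_nonempty by (intro sum_pos)
qed

lemma capacity_pos:
  assumes "a \<in> I"
  shows "capacity a > 0"
  using mass_pos B_pos d_pos[OF assms] by (simp add: capacity_def)

lemma capacity_powr_neg:
  assumes "a \<in> I"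
  shows "capacity a powr (- r) = B / mass * d a powr (r / (r + 1))"
proof -
  have "capacity a powr (- r) = ((mass / B) powr (1 / r)) powr (- r) / (d a powr (1 / (r + 1))) powr (- r)"
    using mass_pos B_pos d_pos[OF assms] unfolding capacity_def by (intro powr_divide)
  also have "\<dots> = (B / mass) / (1 / d a powr (r / (r + 1)))"
    using mass_pos B_pos d_pos[OF assms] r_pos by (simp add: powr_powr powr_minus_divide powr_divide)
  finally show ?thesis by simp
qed

lemma feasible_capacity: "feasible capacity"
proof -
  have "(\<Sum>a\<in>I. capacity a powr (- r)) = (\<Sum>a\<in>I. B / mass * d a powr (r / (r + 1)))"
    by (intro sum.cong) (simp_all add: capacity_powr_neg)
  also have "\<dots> = B / mass * mass"
    by (simp add: mass_def sum_distrib_left)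
  also have "\<dots> = B"
    using mass_pos by simp
  finally show ?thesis
    using capacity_pos by (simp add: feasible_def)
qed

lemma mult_capacity:
  assumes "a \<in> I"
  shows "d a * capacity a = (mass / B) powr (1 / r) * d a powr (r / (r + 1))"
proof -
  have "d a powr (r / (r + 1)) = d a powr (1 - 1 / (r + 1))"
    using r_pos by (simp add: field_simps)
  also have "\<dots> = d a / d a powr (1 / (r + 1))"
    using d_pos[OF assms] by (simp add: powr_diff)
  finally show ?thesis by (simp add: capacity_def)
qed

lemma cost_capacity:
  "(\<Sum>a\<in>I. d a * capacity a) = (\<Sum>a\<in>I. (d a / B powr (1 / r)) powr (r / (r + 1))) powr ((r + 1) / r)"
proof -
  have "(\<Sum>a\<in>I. d a * capacity a) = (mass / B) powr (1 / r) * mass"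
    by (simp add: mult_capacity mass_def sum_distrib_left)
  also have "\<dots> = mass powr ((r + 1) / r) / B powr (1 / r)"
    using mass_pos B_pos r_pos by (simp add: powr_divide add_divide_distrib powr_add)
  finally show ?thesis
    using sum_powr_scaled_powr[OF r_pos B_pos, of I d] d_pos by (simp add: less_imp_le mass_def)
qed

lemma multiplier_eq:
  assumes "a \<in> I"
  shows "multiplier = d a * capacity a powr (r + 1) / r"
proof -
  have "(d a powr (1 / (r + 1))) powr (r + 1) = d a"
    using d_pos[OF assms] r_pos by (simp add: powr_powr)
  moreover have "((mass / B) powr (1 / r)) powr (r + 1) = (mass / B) powr ((r + 1) / r)"
    by (simp add: powr_powr)
  moreover have "capacity a powr (r + 1) = ((mass / B) powr (1 / r)) powr (r + 1) / (d a powr (1 / (r + 1))) powr (r + 1)"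
    unfolding capacity_def using mass_pos B_pos d_pos[OF assms] by (intro powr_divide)
  ultimately have "capacity a powr (r + 1) = (mass / B) powr ((r + 1) / r) / d a"
    by simp
  then show ?thesis
    using d_pos[OF assms] by (simp add: multiplier_def)
qed

lemma cost_gap:
  assumes "feasible y"
  shows "(\<Sum>a\<in>I. d a * y a) - (\<Sum>a\<in>I. d a * capacity a)
       = (\<Sum>a\<in>I. (d a * y a + multiplier * y a powr (- r))
                 - (d a * capacity a + multiplier * capacity a powr (- r)))"
  using assms feasible_capacity
  by (simp add: feasible_def sum_subtractf sum.distrib flip: sum_distrib_left)

lemma lagrangian_term_min:
  assumes "a \<in> I" "y a > 0"
  shows "d a * capacity a + multiplier * capacity a powr (- r) \<le> d a * y a + multiplier * y a powr (- r)"
    and "y a \<noteq> capacity a \<Longrightarrow>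
         d a * capacity a + multiplier * capacity a powr (- r) < d a * y a + multiplier * y a powr (- r)"
  using linear_plus_powr_neg_min[OF d_pos[OF assms(1)] capacity_pos[OF assms(1)] assms(2) r_pos]
  by (simp_all add: multiplier_eq[OF assms(1)])

lemma capacity_minimal:
  assumes "feasible y"
  shows "(\<Sum>a\<in>I. d a * capacity a) \<le> (\<Sum>a\<in>I. d a * y a)"
proof -
  have "0 \<le> (\<Sum>a\<in>I. d a * y a) - (\<Sum>a\<in>I. d a * capacity a)"
    unfolding cost_gap[OF assms] using assms lagrangian_term_min(1)
    by (intro sum_nonneg) (auto simp: feasible_def)
  then show ?thesis by simp
qed

lemma capacity_unique:
  assumes "feasible y" "(\<Sum>a\<in>I. d a * y a) = (\<Sum>a\<in>I. d a * capacity a)" "a \<in> I"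
  shows "y a = capacity a"
proof (rule ccontr)
  assume "y a \<noteq> capacity a"
  have "0 < (\<Sum>a\<in>I. d a * y a) - (\<Sum>a\<in>I. d a * capacity a)"
    unfolding cost_gap[OF assms(1)]
  proof (rule sum_pos2[OF finite_I assms(3)])
    show "0 < d a * y a + multiplier * y a powr (- r) - (d a * capacity a + multiplier * capacity a powr (- r))"
      using lagrangian_term_min(2)[of a y] \<open>y a \<noteq> capacity a\<close> assms by (simp add: feasible_def)
  qed (use assms lagrangian_term_min(1) in \<open>auto simp: feasible_def\<close>)
  with assms(2) show False by simp
qed

end

lemma capacity_allocation_closed_form:
  fixes r B :: real and P :: "'a set" and d :: "'a \<Rightarrow> real"
  assumes "r > 0" "B > 0" "finite P" "\<forall>a\<in>P. d a \<ge> 0" "{a\<in>P. d a > 0} \<noteq> {}"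
  shows "let Pp = {a\<in>P. d a > 0};
          S = (\<Sum>a'\<in>P. d a' powr (r / (r + 1)));
          ys = (\<lambda>a. S powr (1 / r) / (d a powr (1 / (r + 1)) * B powr (1 / r)));
          feas = (\<lambda>y :: 'a \<Rightarrow> real. (\<forall>a\<in>Pp. y a > 0) \<and> (\<Sum>a\<in>Pp. y a powr (- r)) = B);
          obj = (\<lambda>y :: 'a \<Rightarrow> real. \<Sum>a\<in>Pp. d a * y a)
      in feas ys \<and>
         (\<forall>y. feas y \<longrightarrow> obj ys \<le> obj y) \<and>
         (\<forall>y. feas y \<and> obj y = obj ys \<longrightarrow> (\<forall>a\<in>Pp. y a = ys a)) \<and>
         obj ys = (\<Sum>a\<in>P. (d a / B powr (1 / r)) powr (r / (r + 1))) powr ((r + 1) / r)"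
proof -
  define Pp where "Pp = {a\<in>P. d a > 0}"
  interpret capacity_allocation r B d Pp
    using assms by unfold_locales (auto simp: Pp_def)
  have on_Pp: "(\<Sum>a\<in>P. g (d a)) = (\<Sum>a\<in>Pp. g (d a))" if "g 0 = 0" for g :: "real \<Rightarrow> real"
    using assms that by (intro sum.mono_neutral_right) (auto simp: Pp_def order.order_iff_strict)
  have "(\<Sum>a\<in>P. d a powr (r / (r + 1))) = mass"
    unfolding mass_def by (rule on_Pp) simp
  then have capacity_eq: "(\<Sum>a'\<in>P. d a' powr (r / (r + 1))) powr (1 / r) / (d a powr (1 / (r + 1)) * B powr (1 / r))
      = capacity a" for a
    using mass_pos \<open>B > 0\<close> by (simp add: capacity_def powr_divide)
  have scaled_sum_eq: "(\<Sum>a\<in>P. (d a / B powr (1 / r)) powr (r / (r + 1)))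
      = (\<Sum>a\<in>Pp. (d a / B powr (1 / r)) powr (r / (r + 1)))"
    by (rule on_Pp) simp
  show ?thesis
    unfolding Let_def Pp_def[symmetric] capacity_eq scaled_sum_eq feasible_def[symmetric]
  proof (intro conjI allI impI)
    fix y
    assume "feasible y"
    then show "(\<Sum>a\<in>Pp. d a * capacity a) \<le> (\<Sum>a\<in>Pp. d a * y a)"
      by (rule capacity_minimal)
  next
    fix y
    assume "feasible y \<and> (\<Sum>a\<in>Pp. d a * y a) = (\<Sum>a\<in>Pp. d a * capacity a)"
    then show "\<forall>a\<in>Pp. y a = capacity a"
      using capacity_unique by blast
  qed (fact feasible_capacity cost_capacity)+
qed

lemma continuous_on_sum_powr_shift:
  fixes c :: "'a \<Rightarrow> real" and b p q :: real
  assumes "\<forall>a\<in>P. c a \<ge> 0" "b > 0" "p > 0" "q > 0"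
  shows "continuous_on {0..} (\<lambda>\<delta>. (\<Sum>a\<in>P. ((c a + \<delta>) / b) powr p) powr q)"
proof (rule continuous_on_powr')
  have "continuous_on {0..} (\<lambda>\<delta>. ((c a + \<delta>) / b) powr p)" if "a \<in> P" for a
    using assms that by (intro continuous_on_powr' continuous_intros) auto
  then show "continuous_on {0..} (\<lambda>\<delta>. \<Sum>a\<in>P. ((c a + \<delta>) / b) powr p)"
    by (rule continuous_on_sum)
qed (use assms in \<open>auto intro: sum_nonneg\<close>)

text \<open>For \<open>c\<^sub>a = 0\<close> the infimum is not attained, so the costs are perturbed to \<open>c + \<delta>\<close>.\<close>
lemma capacity_allocation_approx:
  fixes r B \<epsilon> :: real and c :: "'a \<Rightarrow> real"
  assumes r: "r > 0" and B: "B > 0" and P: "finite P" "P \<noteq> {}" and c: "\<forall>a\<in>P. c a \<ge> 0"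
    and "\<epsilon> > 0"
  shows "\<exists>y. (\<forall>a\<in>P. y a > 0) \<and> (\<Sum>a\<in>P. y a powr (- r)) = B \<and>
             (\<Sum>a\<in>P. c a * y a) \<le> (\<Sum>a\<in>P. (c a / B powr (1 / r)) powr (r / (r + 1))) powr ((r + 1) / r) + \<epsilon>"
proof -
  define g where "g \<delta> = (\<Sum>a\<in>P. ((c a + \<delta>) / B powr (1 / r)) powr (r / (r + 1))) powr ((r + 1) / r)" for \<delta>
  have "continuous_on {0..} g"
    unfolding g_def using c B r by (intro continuous_on_sum_powr_shift) auto
  then obtain d where "d > 0" and d: "\<forall>x\<in>{0..}. dist x 0 < d \<longrightarrow> dist (g x) (g 0) < \<epsilon>"
    using continuous_on_iff[THEN iffD1, rule_format, of "{0..}" g 0 \<epsilon>] \<open>\<epsilon> > 0\<close> by auto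
  define \<delta> where "\<delta> = d / 2"
  have "\<delta> > 0" "dist \<delta> 0 < d"
    using \<open>d > 0\<close> by (simp_all add: \<delta>_def)
  then have g_\<delta>: "g \<delta> < g 0 + \<epsilon>"
    using d by (auto simp: dist_real_def)
  interpret capacity_allocation r B "\<lambda>a. c a + \<delta>" P
  proof
    show "\<And>a. a \<in> P \<Longrightarrow> 0 < c a + \<delta>"
      using c \<open>\<delta> > 0\<close> by (simp add: add_nonneg_pos)
  qed (use r B P in auto)
  have "(\<Sum>a\<in>P. c a * capacity a) \<le> (\<Sum>a\<in>P. (c a + \<delta>) * capacity a)"
    using capacity_pos \<open>\<delta> > 0\<close> by (intro sum_mono) (simp add: distrib_right less_imp_le)
  also have "\<dots> = g \<delta>"
    unfolding cost_capacity g_def ..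
  finally have "(\<Sum>a\<in>P. c a * capacity a) \<le> g 0 + \<epsilon>"
    using g_\<delta> by linarith
  then show ?thesis
    using feasible_capacity unfolding feasible_def g_def by auto
qed

section \<open>Paths in the underlying undirected graph\<close>

definition joins :: "('a \<Rightarrow> 'v) \<Rightarrow> ('a \<Rightarrow> 'v) \<Rightarrow> 'a \<Rightarrow> 'v \<Rightarrow> 'v \<Rightarrow> bool" where
  "joins tail head a u v \<longleftrightarrow> tail a = u \<and> head a = v \<or> head a = u \<and> tail a = v"

definition path_seq :: "'a set \<Rightarrow> ('a \<Rightarrow> 'v) \<Rightarrow> ('a \<Rightarrow> 'v) \<Rightarrow> 'a list \<Rightarrow> 'v list \<Rightarrow> bool" where
  "path_seq S tail head as vs \<longleftrightarrow>
     distinct as \<and> distinct vs \<and> length vs = length as + 1 \<and> set as \<subseteq> S \<and>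
     (\<forall>i < length as. joins tail head (as ! i) (vs ! i) (vs ! (i + 1)))"

lemma st_path_iff_path_seq:
  "st_path S tail head s t P \<longleftrightarrow>
     (\<exists>as vs. path_seq S tail head as vs \<and> vs ! 0 = s \<and> vs ! length as = t \<and> P = set as)"
  unfolding st_path_def path_seq_def joins_def by blast

lemma undirected_rel_iff_joins:
  "(u, v) \<in> undirected_rel S tail head \<longleftrightarrow> (\<exists>a\<in>S. joins tail head a u v)"
  unfolding undirected_rel_def joins_def by blast

lemma path_seq_take:
  assumes "path_seq S tail head as vs" "j \<le> length as"
  shows "path_seq S tail head (take j as) (take (j + 1) vs)"
  using assms unfolding path_seq_def by (auto dest: in_set_takeD)

lemma path_seq_snoc:
  assumes p: "path_seq S tail head as vs" and "a \<in> S" "v \<notin> set vs"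
    and a: "joins tail head a (vs ! length as) v"
  shows "path_seq S tail head (as @ [a]) (vs @ [v])"
proof -
  have len: "length vs = length as + 1"
    using p by (simp add: path_seq_def)
  have "a \<notin> set as"
  proof
    assume "a \<in> set as"
    then obtain i where "i < length as" "as ! i = a"
      by (auto simp: in_set_conv_nth)
    with p have "joins tail head a (vs ! i) (vs ! (i + 1))"
      by (auto simp: path_seq_def)
    moreover have "vs ! i \<in> set vs" "vs ! (i + 1) \<in> set vs"
      using \<open>i < length as\<close> len by simp_all
    ultimately show False
      using a \<open>v \<notin> set vs\<close> by (auto simp: joins_def)
  qed
  moreover have "joins tail head ((as @ [a]) ! i) ((vs @ [v]) ! i) ((vs @ [v]) ! (i + 1))"
    if "i < length as + 1" for i
  proof (cases "i < length as")
    case True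
    then show ?thesis
      using p len by (simp add: path_seq_def nth_append)
  next
    case False
    then have "i = length as"
      using that by simp
    then show ?thesis
      using a len by (simp add: nth_append)
  qed
  ultimately show ?thesis
    using p \<open>a \<in> S\<close> \<open>v \<notin> set vs\<close> len by (simp add: path_seq_def)
qed

lemma st_path_Nil: "st_path S tail head s s {}"
  unfolding st_path_def by (intro exI[of _ "[]"] exI[of _ "[s]"]) auto

lemma st_path_subset: "st_path S tail head s t P \<Longrightarrow> P \<subseteq> S"
  unfolding st_path_def by auto

lemma st_path_finite: "st_path S tail head s t P \<Longrightarrow> finite P"
  unfolding st_path_def by auto

lemma st_path_mono: "st_path S tail head s t P \<Longrightarrow> S \<subseteq> S' \<Longrightarrow> st_path S' tail head s t P"
  unfolding st_path_def by blast

lemma st_path_nonempty: "st_path S tail head s t P \<Longrightarrow> s \<noteq> t \<Longrightarrow> P \<noteq> {}"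
  unfolding st_path_def by auto

lemma finite_st_paths:
  assumes "finite S"
  shows "finite {P. st_path S tail head s t P}"
proof (rule finite_subset)
  show "{P. st_path S tail head s t P} \<subseteq> Pow S"
    by (auto dest: st_path_subset)
qed (use assms in simp)

text \<open>If \<open>v\<close> already lies on the path the prefix ending in \<open>v\<close> is taken, otherwise \<open>a\<close> is appended.\<close>
lemma st_path_extend:
  assumes "st_path S tail head s u P" "a \<in> S" "joins tail head a u v"
  shows "\<exists>P'. st_path S tail head s v P' \<and> P' \<subseteq> insert a P"
proof -
  obtain as vs where p: "path_seq S tail head as vs" "vs ! 0 = s" "vs ! length as = u" "P = set as"
    using assms(1) by (auto simp: st_path_iff_path_seq)
  have len: "length vs = length as + 1"
    using p(1) by (simp add: path_seq_def)
  show ?thesis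
  proof (cases "v \<in> set vs")
    case True
    then obtain j where j: "j < length vs" "vs ! j = v"
      by (auto simp: in_set_conv_nth)
    then have "j \<le> length as"
      using len by simp
    then have "path_seq S tail head (take j as) (take (j + 1) vs)"
      "take (j + 1) vs ! 0 = s" "take (j + 1) vs ! length (take j as) = v"
      using path_seq_take[OF p(1)] j p(2) len by simp_all
    then have "st_path S tail head s v (set (take j as))"
      unfolding st_path_iff_path_seq by blast
    then show ?thesis
      using p(4) by (meson set_take_subset subset_insertI2)
  next
    case False
    have "path_seq S tail head (as @ [a]) (vs @ [v])"
      "(vs @ [v]) ! 0 = s" "(vs @ [v]) ! length (as @ [a]) = v"
      using path_seq_snoc[OF p(1) assms(2) False] assms(3) p(2,3) len by (simp_all add: nth_append)
    then have "st_path S tail head s v (set (as @ [a]))"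
      unfolding st_path_iff_path_seq by blast
    then show ?thesis
      using p(4) by auto
  qed
qed

lemma st_path_if_rtrancl:
  assumes "(s, v) \<in> (undirected_rel S tail head)\<^sup>*"
  shows "\<exists>P. st_path S tail head s v P"
  using assms
proof (induction rule: rtrancl_induct)
  case base
  show ?case by (rule exI, rule st_path_Nil)
next
  case (step u v)
  then obtain a where "a \<in> S" "joins tail head a u v"
    by (auto simp: undirected_rel_iff_joins)
  moreover obtain P where "st_path S tail head s u P"
    using step.IH by blast
  ultimately show ?case
    using st_path_extend by metis
qed

section \<open>Unit flows\<close>

definition path_flow :: "('a \<Rightarrow> 'v) \<Rightarrow> 'a list \<Rightarrow> 'v list \<Rightarrow> 'a \<Rightarrow> real" where
  "path_flow tail as vs a =
     (\<Sum>i<length as. if a = as ! i then (if tail a = vs ! i then 1 else -1) else 0)"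

lemma abs_path_flow:
  assumes "distinct as" "a \<in> set as"
  shows "\<bar>path_flow tail as vs a\<bar> = 1"
proof -
  obtain j where j: "j < length as" "as ! j = a"
    using assms(2) by (auto simp: in_set_conv_nth)
  have "a = as ! i \<longleftrightarrow> i = j" if "i < length as" for i
    using nth_eq_iff_index_eq[OF assms(1), of j i] j that by auto
  then have "path_flow tail as vs a = (\<Sum>i<length as. if i = j then (if tail a = vs ! j then 1 else -1) else 0)"
    unfolding path_flow_def by (intro sum.cong) simp_all
  then show ?thesis
    using j(1) by simp
qed

lemma path_flow_is_unit_flow:
  assumes p: "path_seq S tail head as vs" and "vs ! 0 = s" "vs ! length as = t" "s \<noteq> t"
  shows "is_unit_flow V (set as) tail head s t (path_flow tail as vs)"
  unfolding is_unit_flow_def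
proof
  fix v
  define n where "n = length as"
  define g where "g i a = (if a = as ! i then (if tail a = vs ! i then 1 else -1) else (0::real))" for i a
  have path_flow_eq: "path_flow tail as vs a = (\<Sum>i<n. g i a)" for a
    by (simp add: path_flow_def g_def n_def)
  have len: "length vs = n + 1" and dist: "distinct vs"
    and link: "\<And>i. i < n \<Longrightarrow> joins tail head (as ! i) (vs ! i) (vs ! (i + 1))"
    using p by (auto simp: path_seq_def n_def)
  have net_g: "(\<Sum>a\<in>{a\<in>set as. tail a = v}. g i a) - (\<Sum>a\<in>{a\<in>set as. head a = v}. g i a)
      = (if v = vs ! i then 1 else 0) - (if v = vs ! Suc i then 1 else 0)" if i: "i < n" for i
  proof -
    have "vs ! i \<noteq> vs ! (i + 1)"
      using dist len i by (simp add: nth_eq_iff_index_eq)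
    moreover have "as ! i \<in> set as"
      using i n_def by simp
    then have "(\<Sum>a\<in>{a\<in>set as. tail a = v}. g i a) = (if tail (as ! i) = v then g i (as ! i) else 0)"
      "(\<Sum>a\<in>{a\<in>set as. head a = v}. g i a) = (if head (as ! i) = v then g i (as ! i) else 0)"
      unfolding g_def by simp_all
    ultimately show ?thesis
      using link[OF i] by (auto simp: g_def joins_def)
  qed
  have "(\<Sum>a\<in>{a\<in>set as. tail a = v}. path_flow tail as vs a) - (\<Sum>a\<in>{a\<in>set as. head a = v}. path_flow tail as vs a)
      = (\<Sum>i<n. (\<Sum>a\<in>{a\<in>set as. tail a = v}. g i a) - (\<Sum>a\<in>{a\<in>set as. head a = v}. g i a))"
    unfolding path_flow_eq by (simp add: sum.swap[of _ _ "{..<n}"] sum_subtractf)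
  also have "\<dots> = (\<Sum>i<n. (if v = vs ! i then 1 else 0) - (if v = vs ! Suc i then 1 else 0))"
    using net_g by (intro sum.cong) auto
  also have "\<dots> = (if v = vs ! 0 then 1 else 0) - (if v = vs ! n then 1 else 0)"
    by (rule sum_lessThan_telescope')
  also have "\<dots> = (if v = s then 1 else if v = t then -1 else 0)"
    using assms(2-4) n_def by auto
  finally show "(\<Sum>a\<in>{a\<in>set as. tail a = v}. path_flow tail as vs a)
      - (\<Sum>a\<in>{a\<in>set as. head a = v}. path_flow tail as vs a)
      = (if v = s then 1 else if v = t then -1 else 0)" .
qed

lemma path_unit_flow:
  assumes "st_path A tail head s t P" "s \<noteq> t"
  shows "\<exists>f. is_unit_flow V P tail head s t f \<and> (\<forall>a\<in>P. \<bar>f a\<bar> = 1)"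
proof -
  obtain as vs where p: "path_seq A tail head as vs" "vs ! 0 = s" "vs ! length as = t" "P = set as"
    using assms(1) by (auto simp: st_path_iff_path_seq)
  then have "distinct as"
    by (simp add: path_seq_def)
  show ?thesis
  proof (intro exI conjI)
    show "is_unit_flow V P tail head s t (path_flow tail as vs)"
      using path_flow_is_unit_flow[OF p(1-3) assms(2)] p(4) by simp
    show "\<forall>a\<in>P. \<bar>path_flow tail as vs a\<bar> = 1"
      unfolding p(4) using abs_path_flow[OF \<open>distinct as\<close>] by blast
  qed
qed

lemma unit_flow_potential_difference:
  fixes f \<pi> :: "_ \<Rightarrow> real"
  assumes "finite V" "finite S" "\<forall>a\<in>S. tail a \<in> V \<and> head a \<in> V"
    and "s \<in> V" "t \<in> V" "s \<noteq> t" "is_unit_flow V S tail head s t f"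
  shows "(\<Sum>a\<in>S. f a * (\<pi> (head a) - \<pi> (tail a))) = \<pi> t - \<pi> s"
proof -
  have by_endpoint: "(\<Sum>a\<in>S. f a * \<pi> (h a)) = (\<Sum>v\<in>V. \<pi> v * (\<Sum>a\<in>{a\<in>S. h a = v}. f a))"
    if "\<forall>a\<in>S. h a \<in> V" for h :: "_ \<Rightarrow> _"
  proof -
    have "(\<Sum>a\<in>S. f a * \<pi> (h a)) = (\<Sum>v\<in>V. \<Sum>a\<in>{a\<in>S. h a = v}. f a * \<pi> (h a))"
      using assms(1,2) that by (intro sum.group[symmetric]) auto
    also have "\<dots> = (\<Sum>v\<in>V. \<pi> v * (\<Sum>a\<in>{a\<in>S. h a = v}. f a))"
      by (simp add: sum_distrib_left mult.commute)
    finally show ?thesis .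
  qed
  have "(\<Sum>a\<in>S. f a * (\<pi> (head a) - \<pi> (tail a)))
      = - (\<Sum>v\<in>V. \<pi> v * ((\<Sum>a\<in>{a\<in>S. tail a = v}. f a) - (\<Sum>a\<in>{a\<in>S. head a = v}. f a)))"
    using by_endpoint[of head] by_endpoint[of tail] assms(3)
    by (simp add: right_diff_distrib sum_subtractf)
  also have "\<dots> = - (\<Sum>v\<in>V. \<pi> v * (if v = s then 1 else if v = t then -1 else 0))"
    using assms(7) unfolding is_unit_flow_def by (intro arg_cong[where f = uminus] sum.cong) auto
  also have "\<dots> = \<pi> t - \<pi> s"
    using assms(1,4,5,6) by (simp add: if_distrib sum.If_cases)
  finally show ?thesis .
qed

text \<open>The cap \<open>M\<close> keeps the minimum defined at vertices that are not reachable from \<open>s\<close>.\<close>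
definition capped_dist ::
  "real \<Rightarrow> 'a set \<Rightarrow> ('a \<Rightarrow> 'v) \<Rightarrow> ('a \<Rightarrow> 'v) \<Rightarrow> ('a \<Rightarrow> real) \<Rightarrow> 'v \<Rightarrow> 'v \<Rightarrow> real" where
  "capped_dist M S tail head w s v =
     Min (insert M ((\<lambda>P. \<Sum>a\<in>P. w a) ` {P. st_path S tail head s v P}))"

context
  fixes S :: "'a set" and tail head :: "'a \<Rightarrow> 'v" and w :: "'a \<Rightarrow> real" and M :: real and s :: 'v
  assumes finite_S: "finite S"
begin

lemma capped_dist_le_cap: "capped_dist M S tail head w s v \<le> M"
  unfolding capped_dist_def using finite_st_paths[OF finite_S, of tail head s v] by (intro Min_le) auto

lemma capped_dist_le_path:
  "st_path S tail head s v P \<Longrightarrow> capped_dist M S tail head w s v \<le> (\<Sum>a\<in>P. w a)"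
  unfolding capped_dist_def using finite_st_paths[OF finite_S, of tail head s v] by (intro Min_le) auto

lemma capped_dist_cases:
  "capped_dist M S tail head w s v = M \<or>
   (\<exists>P. st_path S tail head s v P \<and> capped_dist M S tail head w s v = (\<Sum>a\<in>P. w a))"
proof -
  have "capped_dist M S tail head w s v \<in> insert M ((\<lambda>P. \<Sum>a\<in>P. w a) ` {P. st_path S tail head s v P})"
    unfolding capped_dist_def using finite_st_paths[OF finite_S, of tail head s v] by (intro Min_in) auto
  then show ?thesis by auto
qed

lemma capped_dist_joins:
  assumes "\<forall>a\<in>S. w a \<ge> 0" "a \<in> S" "joins tail head a u v"
  shows "capped_dist M S tail head w s v \<le> capped_dist M S tail head w s u + w a"
  using capped_dist_cases[of u]
proof
  assume "capped_dist M S tail head w s u = M"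
  moreover have "w a \<ge> 0"
    using assms(1,2) by blast
  ultimately show ?thesis
    using capped_dist_le_cap[of v] by linarith
next
  assume "\<exists>P. st_path S tail head s u P \<and> capped_dist M S tail head w s u = (\<Sum>a\<in>P. w a)"
  then obtain P where P: "st_path S tail head s u P" "capped_dist M S tail head w s u = (\<Sum>a\<in>P. w a)"
    by blast
  obtain P' where P': "st_path S tail head s v P'" "P' \<subseteq> insert a P"
    using st_path_extend[OF P(1) assms(2,3)] by blast
  have "finite P" "P \<subseteq> S"
    using st_path_finite[OF P(1)] st_path_subset[OF P(1)] .
  then have "(\<Sum>a\<in>P'. w a) \<le> (\<Sum>a\<in>insert a P. w a)"
    using P' assms(1,2) by (intro sum_mono2) auto
  also have "\<dots> \<le> w a + (\<Sum>a\<in>P. w a)"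
    using \<open>finite P\<close> \<open>P \<subseteq> S\<close> assms(1,2) by (cases "a \<in> P") (auto simp: insert_absorb)
  finally show ?thesis
    using capped_dist_le_path[OF P'(1)] P(2) by linarith
qed

end

text \<open>The shortest-path potential changes by at most \<open>w\<^sub>a\<close> along an arc \<open>a\<close>; pairing it
  with the flow bounds the length of a shortest \<open>s\<close>--\<open>t\<close> path by \<open>\<Sum> w\<^sub>a |f\<^sub>a|\<close>.\<close>
lemma unit_flow_dominates_path:
  fixes f w :: "'a \<Rightarrow> real"
  assumes "finite V" "finite S" "\<forall>a\<in>S. tail a \<in> V \<and> head a \<in> V"
    and "s \<in> V" "t \<in> V" "s \<noteq> t"
    and flow: "is_unit_flow V S tail head s t f" and w: "\<forall>a\<in>S. w a \<ge> 0"
  shows "\<exists>P. st_path S tail head s t P \<and> (\<Sum>a\<in>P. w a) \<le> (\<Sum>a\<in>S. w a * \<bar>f a\<bar>)"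
proof -
  define F where "F = (\<Sum>a\<in>S. w a * \<bar>f a\<bar>)"
  define \<pi> where "\<pi> = capped_dist (F + 1) S tail head w s"
  have \<pi>_joins: "\<pi> v \<le> \<pi> u + w a" if "a \<in> S" "joins tail head a u v" for a u v
    unfolding \<pi>_def by (rule capped_dist_joins[OF assms(2) w that])
  have "f a * (\<pi> (head a) - \<pi> (tail a)) \<le> w a * \<bar>f a\<bar>" if "a \<in> S" for a
  proof -
    have "\<bar>\<pi> (head a) - \<pi> (tail a)\<bar> \<le> w a"
      using \<pi>_joins[OF that, of "tail a" "head a"] \<pi>_joins[OF that, of "head a" "tail a"]
      by (auto simp: joins_def)
    have "f a * (\<pi> (head a) - \<pi> (tail a)) \<le> \<bar>f a\<bar> * \<bar>\<pi> (head a) - \<pi> (tail a)\<bar>"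
      by (simp flip: abs_mult)
    also have "\<dots> \<le> \<bar>f a\<bar> * w a"
      using \<open>\<bar>\<pi> (head a) - \<pi> (tail a)\<bar> \<le> w a\<close> by (intro mult_left_mono) auto
    finally show ?thesis
      by (simp add: mult.commute)
  qed
  then have "\<pi> t - \<pi> s \<le> F"
    unfolding F_def unit_flow_potential_difference[OF assms(1-6) flow, symmetric]
    by (intro sum_mono) auto
  moreover have "\<pi> s \<le> 0"
    using capped_dist_le_path[OF assms(2) st_path_Nil] by (simp add: \<pi>_def)
  ultimately have "\<pi> t \<noteq> F + 1"
    by linarith
  moreover have "\<pi> t = F + 1 \<or> (\<exists>P. st_path S tail head s t P \<and> \<pi> t = (\<Sum>a\<in>P. w a))"
    unfolding \<pi>_def by (rule capped_dist_cases[OF assms(2)])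
  ultimately obtain P where "st_path S tail head s t P" "\<pi> t = (\<Sum>a\<in>P. w a)"
    by blast
  moreover have "\<pi> t \<le> F"
    using \<open>\<pi> t - \<pi> s \<le> F\<close> \<open>\<pi> s \<le> 0\<close> by linarith
  ultimately show ?thesis
    unfolding F_def by auto
qed

lemma flow_weight_le_cost_energy:
  fixes r :: real and c y f :: "'a \<Rightarrow> real"
  assumes r: "r > 0" and "finite S" and cy: "\<forall>a\<in>S. c a \<ge> 0 \<and> y a > 0"
  shows "(\<Sum>a\<in>S. c a powr (r / (r + 1)) * \<bar>f a\<bar>)
         \<le> (\<Sum>a\<in>S. c a * y a) powr (r / (r + 1)) * (\<Sum>a\<in>S. \<bar>f a\<bar> powr (r + 1) / y a powr r) powr (1 / (r + 1))"
proof -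
  define \<alpha> where "\<alpha> = r / (r + 1)"
  define \<beta> where "\<beta> = 1 / (r + 1)"
  have "c a powr \<alpha> * \<bar>f a\<bar> = (c a * y a) powr \<alpha> * (\<bar>f a\<bar> powr (r + 1) / y a powr r) powr \<beta>"
    if "a \<in> S" for a
  proof -
    have "c a \<ge> 0" "y a > 0"
      using cy that by auto
    moreover have "(r + 1) * \<beta> = 1" "r * \<beta> = \<alpha>"
      using r by (simp_all add: \<alpha>_def \<beta>_def)
    ultimately show ?thesis
      by (simp add: powr_mult powr_divide powr_powr)
  qed
  then have "(\<Sum>a\<in>S. c a powr \<alpha> * \<bar>f a\<bar>)
      = (\<Sum>a\<in>S. (c a * y a) powr \<alpha> * (\<bar>f a\<bar> powr (r + 1) / y a powr r) powr \<beta>)"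
    by (rule sum.cong[OF refl])
  also have "\<dots> \<le> (\<Sum>a\<in>S. c a * y a) powr \<alpha> * (\<Sum>a\<in>S. \<bar>f a\<bar> powr (r + 1) / y a powr r) powr \<beta>"
  proof (rule Holder_sum_powr[OF \<open>finite S\<close>])
    show "\<forall>a\<in>S. 0 \<le> c a * y a \<and> 0 \<le> \<bar>f a\<bar> powr (r + 1) / y a powr r"
      using cy by (simp add: less_imp_le)
    show "0 \<le> \<alpha>" "0 \<le> \<beta>" "\<alpha> + \<beta> = 1"
      using r by (simp_all add: \<alpha>_def \<beta>_def add_divide_distrib[symmetric])
  qed
  finally show ?thesis
    unfolding \<alpha>_def \<beta>_def .
qed

lemma unit_flow_cost_lower_bound:
  fixes r B :: real and c y f :: "'a \<Rightarrow> real"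
  assumes r: "r > 0" and B: "B > 0" and "finite V" "finite A"
    and ends: "\<forall>a\<in>A. tail a \<in> V \<and> head a \<in> V" and "s \<in> V" "t \<in> V" "s \<noteq> t"
    and c: "\<forall>a\<in>A. c a \<ge> 0" and y: "\<forall>a\<in>A. y a \<ge> 0"
    and flow: "is_unit_flow V (supp A y) tail head s t f"
    and energy: "(\<Sum>a\<in>supp A y. \<bar>f a\<bar> powr (r + 1) / y a powr r) \<le> B"
  shows "\<exists>P. st_path A tail head s t P \<and> P \<subseteq> supp A y \<and>
          (\<Sum>a\<in>P. c a powr (r / (r + 1))) powr ((r + 1) / r) / B powr (1 / r) \<le> (\<Sum>a\<in>A. c a * y a)"
proof -
  define S where "S = supp A y"
  define \<alpha> where "\<alpha> = r / (r + 1)"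
  define C where "C = (\<Sum>a\<in>A. c a * y a)"
  have SA: "S \<subseteq> A" and cy: "\<forall>a\<in>S. c a \<ge> 0 \<and> y a > 0"
    using c by (auto simp: S_def supp_def)
  have finite_S: "finite S"
    using \<open>finite A\<close> SA finite_subset by blast
  have C_S: "C = (\<Sum>a\<in>S. c a * y a)"
    unfolding C_def using \<open>finite A\<close> SA y by (intro sum.mono_neutral_right) (auto simp: S_def supp_def)
  have C_nonneg: "C \<ge> 0"
    unfolding C_def using c y by (intro sum_nonneg) auto
  have "\<forall>a\<in>S. tail a \<in> V \<and> head a \<in> V"
    using ends SA by blast
  then obtain P where P: "st_path S tail head s t P" "(\<Sum>a\<in>P. c a powr \<alpha>) \<le> (\<Sum>a\<in>S. c a powr \<alpha> * \<bar>f a\<bar>)"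
    using unit_flow_dominates_path[OF \<open>finite V\<close> finite_S _ \<open>s \<in> V\<close> \<open>t \<in> V\<close> \<open>s \<noteq> t\<close> flow[folded S_def],
        of "\<lambda>a. c a powr \<alpha>"]
    by auto
  note P(2)
  also have "\<dots> \<le> C powr \<alpha> * (\<Sum>a\<in>S. \<bar>f a\<bar> powr (r + 1) / y a powr r) powr (1 / (r + 1))"
    unfolding C_S \<alpha>_def by (rule flow_weight_le_cost_energy[OF r finite_S cy])
  also have "\<dots> \<le> C powr \<alpha> * B powr (1 / (r + 1))"
    using energy r by (intro mult_left_mono powr_mono2) (auto simp: S_def sum_nonneg)
  finally have "(\<Sum>a\<in>P. c a powr \<alpha>) powr (1 / \<alpha>) \<le> (C powr \<alpha> * B powr (1 / (r + 1))) powr (1 / \<alpha>)"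
    using r by (intro powr_mono2) (auto simp: \<alpha>_def sum_nonneg)
  also have "\<dots> = C * B powr (1 / r)"
    using r C_nonneg B by (simp add: \<alpha>_def powr_mult powr_powr)
  finally have "(\<Sum>a\<in>P. c a powr \<alpha>) powr (1 / \<alpha>) / B powr (1 / r) \<le> C"
    using B by (simp add: divide_le_eq)
  moreover have "st_path A tail head s t P" "P \<subseteq> S"
    using st_path_mono[OF P(1) SA] st_path_subset[OF P(1)] .
  ultimately show ?thesis
    unfolding S_def C_def \<alpha>_def by auto
qed

section \<open>The network design problem\<close>

definition path_cost :: "real \<Rightarrow> real \<Rightarrow> ('a \<Rightarrow> real) \<Rightarrow> ('a \<Rightarrow> real) \<Rightarrow> 'a set \<Rightarrow> real" where
  "path_cost r B c \<gamma> P =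
     (\<Sum>a\<in>P. (c a / B powr (1 / r)) powr (r / (r + 1))) powr ((r + 1) / r) + (\<Sum>a\<in>P. \<gamma> a)"

lemma eff_res_le_path_capacities:
  assumes "st_path A tail head s t P" "s \<noteq> t" "supp A y = P"
  shows "eff_res V A tail head s t r y \<le> ereal (\<Sum>a\<in>P. y a powr (- r))"
proof -
  obtain f where flow: "is_unit_flow V P tail head s t f" and f: "\<forall>a\<in>P. \<bar>f a\<bar> = 1"
    using path_unit_flow[OF assms(1,2)] by blast
  have "eff_res V A tail head s t r y \<le> ereal (\<Sum>a\<in>P. \<bar>f a\<bar> powr (r + 1) / y a powr r)"
    unfolding eff_res_def assms(3) by (rule Inf_lower) (use flow in blast)
  also have "(\<Sum>a\<in>P. \<bar>f a\<bar> powr (r + 1) / y a powr r) = (\<Sum>a\<in>P. y a powr (- r))"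
    using f by (intro sum.cong) (simp_all add: powr_minus_divide)
  finally show ?thesis .
qed

lemma NDP_value_le_path_cost:
  fixes r B \<epsilon> :: real and c \<gamma> :: "'a \<Rightarrow> real"
  assumes r: "r > 0" and B: "B > 0" and "finite A" and c: "\<forall>a\<in>A. c a \<ge> 0"
    and path: "st_path A tail head s t P" and "s \<noteq> t" and "\<epsilon> > 0"
  shows "NDP_value V A tail head s t r c \<gamma> (\<lambda>_. \<infinity>) B \<le> ereal (path_cost r B c \<gamma> P + \<epsilon>)"
proof -
  have PA: "P \<subseteq> A" and "finite P" and "P \<noteq> {}"
    using path \<open>s \<noteq> t\<close> by (auto dest: st_path_subset st_path_finite st_path_nonempty)
  obtain y0 where y0_pos: "\<forall>a\<in>P. y0 a > 0" and y0_B: "(\<Sum>a\<in>P. y0 a powr (- r)) = B"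
    and y0_cost: "(\<Sum>a\<in>P. c a * y0 a) \<le> (\<Sum>a\<in>P. (c a / B powr (1 / r)) powr (r / (r + 1))) powr ((r + 1) / r) + \<epsilon>"
    using capacity_allocation_approx[OF r B \<open>finite P\<close> \<open>P \<noteq> {}\<close> _ \<open>\<epsilon> > 0\<close>, of c] c PA by auto
  define y where "y a = (if a \<in> P then y0 a else 0)" for a
  define x where "x a = (if a \<in> P then 1 else 0 :: real)" for a
  have "supp A y = P"
    using PA y0_pos by (auto simp: supp_def y_def)
  then have "eff_res V A tail head s t r y \<le> ereal (\<Sum>a\<in>P. y a powr (- r))"
    by (rule eff_res_le_path_capacities[OF path \<open>s \<noteq> t\<close>])
  also have "(\<Sum>a\<in>P. y a powr (- r)) = B"
    unfolding y0_B[symmetric] by (intro sum.cong) (simp_all add: y_def)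
  finally have "eff_res V A tail head s t r y \<le> ereal B" .
  moreover have "\<forall>a\<in>A. x a \<in> {0, 1}" "\<forall>a\<in>A. y a \<ge> 0" "\<forall>a\<in>A. y a > 0 \<longrightarrow> x a = 1"
    using y0_pos by (auto simp: x_def y_def less_imp_le)
  ultimately have "NDP_value V A tail head s t r c \<gamma> (\<lambda>_. \<infinity>) B \<le> ereal (\<Sum>a\<in>A. c a * y a + \<gamma> a * x a)"
    unfolding NDP_value_def by (intro Inf_lower) auto
  also have "(\<Sum>a\<in>A. c a * y a + \<gamma> a * x a) = (\<Sum>a\<in>P. c a * y0 a + \<gamma> a)"
    using \<open>finite A\<close> PA by (intro sum.mono_neutral_cong_right) (auto simp: x_def y_def)
  also have "\<dots> \<le> path_cost r B c \<gamma> P + \<epsilon>"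
    using y0_cost by (simp add: path_cost_def sum.distrib)
  finally show ?thesis
    by simp
qed

text \<open>The energy bound \<open>R\<^sup>y \<le> B\<close> is an infimum, so only \<open>B/z\<^sup>r\<close> (for \<open>0 < z < 1\<close>) is
  realised by an actual flow; this costs the factor \<open>z\<close>.\<close>
lemma design_cost_ge_path_cost:
  fixes r B z :: real and c \<gamma> x y :: "'a \<Rightarrow> real"
  assumes r: "r > 0" and B: "B > 0" and "finite V" "finite A"
    and ends: "\<forall>a\<in>A. tail a \<in> V \<and> head a \<in> V" and "s \<in> V" "t \<in> V" "s \<noteq> t"
    and c: "\<forall>a\<in>A. c a \<ge> 0" and \<gamma>: "\<forall>a\<in>A. \<gamma> a \<ge> 0"
    and x: "\<forall>a\<in>A. x a \<in> {0, 1}" and y: "\<forall>a\<in>A. y a \<ge> 0" and xy: "\<forall>a\<in>A. y a > 0 \<longrightarrow> x a = 1"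
    and eff: "eff_res V A tail head s t r y \<le> ereal B"
    and z: "0 < z" "z < 1"
  shows "\<exists>P. st_path A tail head s t P \<and> z * path_cost r B c \<gamma> P \<le> (\<Sum>a\<in>A. c a * y a + \<gamma> a * x a)"
proof -
  define B' where "B' = B / z powr r"
  have "z powr r < 1"
    using powr_less_mono2[OF r _ z(2)] z by simp
  then have "B < B'"
    using B z by (simp add: B'_def field_simps)
  with eff have "eff_res V A tail head s t r y < ereal B'"
    by (simp add: le_less_trans)
  then obtain f where flow: "is_unit_flow V (supp A y) tail head s t f"
    and energy: "(\<Sum>a\<in>supp A y. \<bar>f a\<bar> powr (r + 1) / y a powr r) < B'"
    unfolding eff_res_def Inf_less_iff by auto
  have "B' > 0"
    using B \<open>B < B'\<close> by simp
  then obtain P where P: "st_path A tail head s t P" "P \<subseteq> supp A y"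
    and cost: "(\<Sum>a\<in>P. c a powr (r / (r + 1))) powr ((r + 1) / r) / B' powr (1 / r) \<le> (\<Sum>a\<in>A. c a * y a)"
    using unit_flow_cost_lower_bound[OF r _ assms(3-8) c y flow less_imp_le[OF energy]] by blast
  have "B' powr (1 / r) = B powr (1 / r) / z"
    using B z r by (simp add: B'_def powr_divide powr_powr)
  moreover have "PA": "P \<subseteq> A"
    using P(2) by (auto simp: supp_def)
  ultimately have "z * (\<Sum>a\<in>P. (c a / B powr (1 / r)) powr (r / (r + 1))) powr ((r + 1) / r)
      = (\<Sum>a\<in>P. c a powr (r / (r + 1))) powr ((r + 1) / r) / B' powr (1 / r)"
    using sum_powr_scaled_powr[OF r B, of P c] c z by (auto simp: subset_iff)
  with cost have "z * (\<Sum>a\<in>P. (c a / B powr (1 / r)) powr (r / (r + 1))) powr ((r + 1) / r)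
      \<le> (\<Sum>a\<in>A. c a * y a)"
    by simp
  moreover have "z * (\<Sum>a\<in>P. \<gamma> a) \<le> (\<Sum>a\<in>A. \<gamma> a * x a)"
  proof -
    have "z * (\<Sum>a\<in>P. \<gamma> a) \<le> (\<Sum>a\<in>P. \<gamma> a)"
      using z \<gamma> PA by (intro mult_left_le_one_le sum_nonneg) auto
    also have "\<dots> = (\<Sum>a\<in>P. \<gamma> a * x a)"
      using P(2) xy by (intro sum.cong) (auto simp: supp_def)
    also have "\<dots> \<le> (\<Sum>a\<in>A. \<gamma> a * x a)"
      using \<open>finite A\<close> PA \<gamma> x by (intro sum_mono2) auto
    finally show ?thesis .
  qed
  ultimately show ?thesis
    using P(1) by (auto simp: path_cost_def sum.distrib distrib_left)
qed

lemma Min_path_cost_le_design_cost: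
  fixes r B :: real and c \<gamma> x y :: "'a \<Rightarrow> real"
  assumes r: "r > 0" and B: "B > 0" and "finite V" "finite A"
    and ends: "\<forall>a\<in>A. tail a \<in> V \<and> head a \<in> V" and "s \<in> V" "t \<in> V" "s \<noteq> t"
    and c: "\<forall>a\<in>A. c a \<ge> 0" and \<gamma>: "\<forall>a\<in>A. \<gamma> a \<ge> 0"
    and x: "\<forall>a\<in>A. x a \<in> {0, 1}" and y: "\<forall>a\<in>A. y a \<ge> 0" and xy: "\<forall>a\<in>A. y a > 0 \<longrightarrow> x a = 1"
    and eff: "eff_res V A tail head s t r y \<le> ereal B"
  shows "Min {path_cost r B c \<gamma> P | P. st_path A tail head s t P} \<le> (\<Sum>a\<in>A. c a * y a + \<gamma> a * x a)"
proof (rule field_le_mult_one_interval)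
  fix z :: real assume z: "0 < z" "z < 1"
  then obtain P where "st_path A tail head s t P"
    and P: "z * path_cost r B c \<gamma> P \<le> (\<Sum>a\<in>A. c a * y a + \<gamma> a * x a)"
    using design_cost_ge_path_cost[OF assms] by blast
  then have "Min {path_cost r B c \<gamma> P | P. st_path A tail head s t P} \<le> path_cost r B c \<gamma> P"
    using finite_st_paths[OF \<open>finite A\<close>, of tail head s t] by (intro Min_le) auto
  with z P show "z * Min {path_cost r B c \<gamma> P | P. st_path A tail head s t P} \<le> (\<Sum>a\<in>A. c a * y a + \<gamma> a * x a)"
    by (meson mult_left_mono less_imp_le order_trans)
qed

lemma NDP_value_unbounded_eq_Min_path_cost:
  fixes r B :: real and c \<gamma> :: "'a \<Rightarrow> real"
  assumes r: "r > 0" and B: "B > 0" and "finite V" "finite A"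
    and ends: "\<forall>a\<in>A. tail a \<in> V \<and> head a \<in> V" and "s \<in> V" "t \<in> V" "s \<noteq> t"
    and "weakly_connected V A tail head"
    and c: "\<forall>a\<in>A. c a \<ge> 0" and \<gamma>: "\<forall>a\<in>A. \<gamma> a \<ge> 0"
  shows "NDP_value V A tail head s t r c \<gamma> (\<lambda>_. \<infinity>) B =
           ereal (Min {path_cost r B c \<gamma> P | P. st_path A tail head s t P})"
proof (rule antisym)
  define m where "m = Min {path_cost r B c \<gamma> P | P. st_path A tail head s t P}"
  have "(s, t) \<in> (undirected_rel A tail head)\<^sup>*"
    using \<open>weakly_connected V A tail head\<close> \<open>s \<in> V\<close> \<open>t \<in> V\<close>
    unfolding weakly_connected_def by blast
  then have "{P. st_path A tail head s t P} \<noteq> {}"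
    using st_path_if_rtrancl by (simp add: Collect_empty_eq)
  then have "m \<in> path_cost r B c \<gamma> ` {P. st_path A tail head s t P}"
    unfolding m_def setcompr_eq_image using finite_st_paths[OF \<open>finite A\<close>, of tail head s t]
    by (intro Min_in) auto
  then obtain P0 where P0: "st_path A tail head s t P0" "m = path_cost r B c \<gamma> P0"
    by blast
  show "NDP_value V A tail head s t r c \<gamma> (\<lambda>_. \<infinity>) B \<le> ereal m"
  proof (rule ereal_le_epsilon2)
    fix \<epsilon> :: real assume "\<epsilon> > 0"
    then show "NDP_value V A tail head s t r c \<gamma> (\<lambda>_. \<infinity>) B \<le> ereal m + ereal \<epsilon>"
      using NDP_value_le_path_cost[OF r B \<open>finite A\<close> c P0(1) \<open>s \<noteq> t\<close>] P0(2) by simp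
  qed
  show "ereal m \<le> NDP_value V A tail head s t r c \<gamma> (\<lambda>_. \<infinity>) B"
    unfolding NDP_value_def m_def
    using Min_path_cost_le_design_cost[OF assms(1-8) c \<gamma>] by (intro Inf_greatest) auto
qed

theorem mainTheorem8:
  fixes r B :: real
    and V :: "'v set" and A :: "'a set"
    and tail head :: "'a \<Rightarrow> 'v" and s t :: 'v
    and c \<gamma> :: "'a \<Rightarrow> real"
  assumes "r \<ge> 1" and "B > 0"
    and "finite V" and "finite A"
    and "\<forall>a\<in>A. tail a \<in> V \<and> head a \<in> V"
    and "s \<in> V" and "t \<in> V" and "s \<noteq> t"
    and "weakly_connected V A tail head"
    and "\<forall>a\<in>A. c a \<ge> 0" and "\<forall>a\<in>A. \<gamma> a \<ge> 0"
  shows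
    "(\<forall>(P :: 'a set) (d :: 'a \<Rightarrow> real).
        finite P \<and> (\<forall>a\<in>P. d a \<ge> 0) \<and> {a\<in>P. d a > 0} \<noteq> {} \<longrightarrow>
        (let Pp = {a\<in>P. d a > 0};
             S = (\<Sum>a'\<in>P. d a' powr (r / (r + 1)));
             ys = (\<lambda>a. S powr (1 / r) / (d a powr (1 / (r + 1)) * B powr (1 / r)));
             feas = (\<lambda>y :: 'a \<Rightarrow> real. (\<forall>a\<in>Pp. y a > 0) \<and> (\<Sum>a\<in>Pp. y a powr (- r)) = B);
             obj = (\<lambda>y :: 'a \<Rightarrow> real. \<Sum>a\<in>Pp. d a * y a)
         in feas ys \<and>
            (\<forall>y. feas y \<longrightarrow> obj ys \<le> obj y) \<and>
            (\<forall>y. feas y \<and> obj y = obj ys \<longrightarrow> (\<forall>a\<in>Pp. y a = ys a)) \<and>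
            obj ys = (\<Sum>a\<in>P. (d a / B powr (1 / r)) powr (r / (r + 1))) powr ((r + 1) / r)))
     \<and>
     NDP_value V A tail head s t r c \<gamma> (\<lambda>_. \<infinity>) B =
       ereal (Min {(\<Sum>a\<in>P. (c a / B powr (1 / r)) powr (r / (r + 1))) powr ((r + 1) / r)
                    + (\<Sum>a\<in>P. \<gamma> a) | P. st_path A tail head s t P})"
proof -
  have r: "r > 0"
    using assms(1) by simp
  show ?thesis
    using capacity_allocation_closed_form[OF r assms(2)]
      NDP_value_unbounded_eq_Min_path_cost[OF r assms(2-11)]
    unfolding path_cost_def by blast
qed

end
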